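(* Let $(I,\mathscr{I},\nu)$ be a probability space and $\{C_i\}_{i\in I}$ a family of non-empty closed convex subsets of $\mathbb{R}^k$ such that $(i,x)\mapsto P_{C_i}(x)$ is measurable, where $P_{C_i}$ is the Euclidean projection onto $C_i$. Let $$C^\ast=\{x\in\mathbb{R}^k\colon x\in C_i \text{ for } \nu\text{-almost every } i\}$$ and assume $C^\ast\neq\emptyset$. Let $(\xi_n)$ be an ergodic stationary sequence of $I$-valued random variables with distribution $\nu$, let $\alpha\in(0,2)$, and for any $x_0\in\mathbb{R}^k$ define $X_0=x_0$, $X_{n+1}=X_n+\alpha\,(P_{C_{\xi_n}}(X_n)-X_n)$. Then $(X_n)$ converges almost surely to a random variable $X$ with $X\in C^\ast$ almost surely.
   Context: A sequence $(\xi_n)$ is ergodic stationary if its law on $I^{\mathbb{N}}$ is invariant and ergodic under the left shift. *)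

theory Defs
  imports "HOL-Probability.Probability"
begin

definition seq_shift :: "(nat \<Rightarrow> 'i) \<Rightarrow> (nat \<Rightarrow> 'i)" where
  "seq_shift f = (\<lambda>n. f (Suc n))"

definition seq_law :: "'w measure \<Rightarrow> 'i measure \<Rightarrow> (nat \<Rightarrow> 'w \<Rightarrow> 'i) \<Rightarrow> (nat \<Rightarrow> 'i) measure" where
  "seq_law M \<nu> \<xi> = distr M (PiM UNIV (\<lambda>_. \<nu>)) (\<lambda>\<omega> n. \<xi> n \<omega>)"

definition ergodic_stationary :: "'w measure \<Rightarrow> 'i measure \<Rightarrow> (nat \<Rightarrow> 'w \<Rightarrow> 'i) \<Rightarrow> bool" where
  "ergodic_stationary M \<nu> \<xi> \<longleftrightarrow>
     (let L = seq_law M \<nu> \<xi> in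
        distr L (PiM UNIV (\<lambda>_. \<nu>)) seq_shift = L \<and>
        (\<forall>A \<in> sets L. seq_shift -` A \<inter> space L = A \<longrightarrow>
             emeasure L A = 0 \<or> emeasure L A = 1))"

primrec proj_iter :: "('i \<Rightarrow> 'a::euclidean_space set) \<Rightarrow> real \<Rightarrow> 'a \<Rightarrow> (nat \<Rightarrow> 'w \<Rightarrow> 'i) \<Rightarrow> nat \<Rightarrow> 'w \<Rightarrow> 'a" where
  "proj_iter C \<alpha> x0 \<xi> 0 \<omega> = x0"
| "proj_iter C \<alpha> x0 \<xi> (Suc n) \<omega> =
     (let x = proj_iter C \<alpha> x0 \<xi> n \<omega> in x + \<alpha> *\<^sub>R (closest_point (C (\<xi> n \<omega>)) x - x))"

end

theory Submission
  imports Defs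
begin

text \<open>
  Let \<open>T\<close> be the essential intersection \<open>C\<^sup>*\<close>. Almost surely every \<open>C\<^sub>\<xi>\<^sub>n\<close> contains \<open>T\<close>, and then
  each relaxed projection step decreases \<open>|X\<^sub>n - z|\<^sup>2\<close> by at least \<open>\<alpha>(2 - \<alpha>) d\<^sub>n\<^sup>2\<close> for every
  \<open>z \<in> T\<close>, where \<open>d\<^sub>n\<close> is the length of the projection step. Hence the iterates are Fejer
  monotone with respect to \<open>T\<close>, \<open>d\<^sub>n \<rightarrow> 0\<close>, and the sequence converges as soon as its
  distance to \<open>T\<close> tends to \<open>0\<close>. If that distance stayed above some \<open>\<rho> > 0\<close>, all iterates would
  lie in a compact set of points far from \<open>T\<close>; cover it by finitely many small balls
  around points \<open>y\<close> each of which is far from \<open>C\<^sub>i\<close> for a set of \<open>i\<close> of positive \<open>\<nu>\<close>-measure.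
  By ergodicity of the shift, windows of a fixed length \<open>l\<close> in which every such ball is
  seen to be far from some \<open>C\<^sub>\<xi>\<^sub>n\<close> recur infinitely often, while \<open>d\<^sub>n \<rightarrow> 0\<close> forces the
  iterate to be close to all sets of a window; this is a contradiction.
\<close>

lemma infdist_eq_dist_closest_point:
  fixes S :: "'a::euclidean_space set"
  assumes "closed S" "S \<noteq> {}"
  shows "infdist x S = dist x (closest_point S x)"
  using assms by (simp add: infdist_eq_setdist setdist_closest_point)

lemma dist_relaxed_projection_step_sq:
  fixes S :: "'a::euclidean_space set"
  assumes "closed S" "convex S" "z \<in> S" "0 \<le> \<alpha>"
  shows "(dist (x + \<alpha> *\<^sub>R (closest_point S x - x)) z)\<^sup>2
     \<le> (dist x z)\<^sup>2 - \<alpha> * (2 - \<alpha>) * (dist x (closest_point S x))\<^sup>2"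
proof -
  define p where "p = closest_point S x"
  have obtuse: "inner (x - p) (z - p) \<le> 0"
    unfolding p_def using assms(2,1,3) by (rule closest_point_dot)
  have "(dist (x + \<alpha> *\<^sub>R (p - x)) z)\<^sup>2
      = (dist x z)\<^sup>2 - \<alpha> * (2 - \<alpha>) * (dist x p)\<^sup>2 + 2 * \<alpha> * inner (x - p) (z - p)"
    unfolding dist_norm power2_norm_eq_inner
    by (simp add: inner_add_left inner_add_right inner_diff_left inner_diff_right
        inner_commute[of p x] inner_commute[of z x] inner_commute[of z p] algebra_simps power2_eq_square)
  moreover have "2 * \<alpha> * inner (x - p) (z - p) \<le> 0"
    using obtuse assms(4) by (simp add: mult_nonneg_nonpos)
  ultimately show ?thesis unfolding p_def by linarith
qed

definition essential_Inter :: "'i measure \<Rightarrow> ('i \<Rightarrow> 'a set) \<Rightarrow> 'a set" where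
  "essential_Inter \<nu> C = {x. AE i in \<nu>. x \<in> C i}"

lemma closed_essential_Inter:
  fixes C :: "'i \<Rightarrow> 'a::metric_space set"
  assumes "\<And>i. i \<in> space \<nu> \<Longrightarrow> closed (C i)"
  shows "closed (essential_Inter \<nu> C)"
  unfolding closed_sequential_limits
proof (intro allI impI, elim conjE)
  fix s l assume s: "\<forall>n. s n \<in> essential_Inter \<nu> C" and l: "s \<longlonglongrightarrow> l"
  have "AE i in \<nu>. \<forall>n. s n \<in> C i"
    using s unfolding essential_Inter_def AE_all_countable by blast
  with AE_space have "AE i in \<nu>. l \<in> C i"
  proof eventually_elim
    case (elim i)
    show ?case by (rule closed_sequentially[OF assms[OF elim(1)] elim(2)[rule_format] l])
  qed
  then show "l \<in> essential_Inter \<nu> C" unfolding essential_Inter_def by blast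
qed

lemma AE_essential_Inter_subset:
  fixes C :: "'i \<Rightarrow> 'a::{metric_space, second_countable_topology} set"
  assumes "\<And>i. i \<in> space \<nu> \<Longrightarrow> closed (C i)"
  shows "AE i in \<nu>. essential_Inter \<nu> C \<subseteq> C i"
proof -
  obtain D where D: "countable D" "D \<subseteq> essential_Inter \<nu> C" "essential_Inter \<nu> C \<subseteq> closure D"
    by (rule separable)
  have "AE i in \<nu>. \<forall>y\<in>D. y \<in> C i"
    unfolding AE_ball_countable[OF D(1)] using D(2) unfolding essential_Inter_def by blast
  with AE_space show ?thesis
  proof eventually_elim
    case (elim i)
    then have "closure D \<subseteq> C i" using assms[OF elim(1)] by (intro closure_minimal) auto
    with D(3) show ?case by blast
  qed
qed

lemma not_in_essential_Inter_far:
  fixes C :: "'i \<Rightarrow> 'a::metric_space set"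
  assumes C: "\<And>i. i \<in> space \<nu> \<Longrightarrow> closed (C i) \<and> C i \<noteq> {}"
    and meas: "(\<lambda>i. infdist x (C i)) \<in> borel_measurable \<nu>"
    and x: "x \<notin> essential_Inter \<nu> C"
  shows "\<exists>r>0. emeasure \<nu> {i \<in> space \<nu>. r < infdist x (C i)} \<noteq> 0"
proof (rule ccontr)
  assume "\<not> ?thesis"
  then have null: "emeasure \<nu> {i \<in> space \<nu>. inverse (Suc k) < infdist x (C i)} = 0" for k
    by (meson inverse_positive_iff_positive of_nat_0_less_iff zero_less_Suc)
  have "AE i in \<nu>. infdist x (C i) \<le> inverse (Suc k)" for k
  proof -
    have sets: "{i \<in> space \<nu>. inverse (Suc k) < infdist x (C i)} \<in> sets \<nu>"
      using meas unfolding borel_measurable_iff_greater by blast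
    have "{i \<in> space \<nu>. \<not> infdist x (C i) \<le> inverse (Suc k)} = {i \<in> space \<nu>. inverse (Suc k) < infdist x (C i)}"
      by (simp add: not_le)
    from AE_iff_measurable[OF sets this] null[of k] show ?thesis by (rule iffD2)
  qed
  then have "AE i in \<nu>. \<forall>k. infdist x (C i) \<le> inverse (Suc k)"
    by (simp add: AE_all_countable)
  with AE_space have "AE i in \<nu>. x \<in> C i"
  proof eventually_elim
    case (elim i)
    have "infdist x (C i) = 0"
    proof (rule ccontr)
      assume "infdist x (C i) \<noteq> 0"
      then obtain k where "inverse (Suc k) < infdist x (C i)"
        using reals_Archimedean[of "infdist x (C i)"] infdist_nonneg[of x "C i"] by auto
      with elim(2) show False by (meson not_le)
    qed
    then show ?case using in_closed_iff_infdist_zero C[OF elim(1)] by blast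
  qed
  with x show False unfolding essential_Inter_def by blast
qed

lemma borel_measurable_infdist_closest_point:
  fixes C :: "'i \<Rightarrow> 'a::euclidean_space set"
  assumes meas: "(\<lambda>(i, x). closest_point (C i) x) \<in> borel_measurable (\<nu> \<Otimes>\<^sub>M borel)"
    and C: "\<And>i. i \<in> space \<nu> \<Longrightarrow> closed (C i) \<and> C i \<noteq> {}"
  shows "(\<lambda>i. infdist y (C i)) \<in> borel_measurable \<nu>"
proof -
  have "(\<lambda>i. closest_point (C i) y) \<in> borel_measurable \<nu>"
    using measurable_compose[OF measurable_Pair[OF measurable_ident_sets[OF refl] measurable_const[of y]] meas]
    by simp
  then have "(\<lambda>i. dist y (closest_point (C i) y)) \<in> borel_measurable \<nu>"
    by (rule borel_measurable_dist[OF borel_measurable_const])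
  moreover have "i \<in> space \<nu> \<Longrightarrow> dist y (closest_point (C i) y) = infdist y (C i)" for i
    using C[of i] infdist_eq_dist_closest_point[of "C i" y] by simp
  ultimately show ?thesis
    using measurable_cong[of \<nu> "\<lambda>i. dist y (closest_point (C i) y)" "\<lambda>i. infdist y (C i)" borel] by simp
qed

lemma borel_measurable_proj_iter:
  fixes C :: "'i \<Rightarrow> 'a::euclidean_space set"
  assumes meas: "(\<lambda>(i, x). closest_point (C i) x) \<in> borel_measurable (\<nu> \<Otimes>\<^sub>M borel)"
    and \<xi>: "\<And>n. \<xi> n \<in> measurable M \<nu>"
  shows "proj_iter C \<alpha> x0 \<xi> n \<in> borel_measurable M"
proof (induction n)
  case (Suc n)
  have "(\<lambda>\<omega>. closest_point (C (\<xi> n \<omega>)) (proj_iter C \<alpha> x0 \<xi> n \<omega>)) \<in> borel_measurable M"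
    using measurable_compose[OF measurable_Pair[OF \<xi> Suc] meas] by simp
  with Suc show ?case
    unfolding proj_iter.simps Let_def
    by (intro borel_measurable_add borel_measurable_scaleR borel_measurable_diff borel_measurable_const)
qed simp

text \<open>
  Read \<open>d n y\<close> as the distance from \<open>y\<close> to the \<open>n\<close>-th set of a sequence. This is the pathwise
  property that ergodicity provides almost surely and that forces the iterates towards \<open>T\<close>.
\<close>
definition far_points_recurrently_separated ::
    "'a::metric_space set \<Rightarrow> 'a \<Rightarrow> real \<Rightarrow> (nat \<Rightarrow> 'a \<Rightarrow> real) \<Rightarrow> bool" where
  "far_points_recurrently_separated T z R d \<longleftrightarrow>
     (\<forall>q::nat. \<exists>F r l. finite F \<and> (\<forall>y\<in>F. 0 < r y) \<and>
        {y \<in> cball z R. inverse (Suc q) \<le> infdist y T} \<subseteq> (\<Union>y\<in>F. ball y (r y)) \<and>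
        (\<exists>\<^sub>F n in sequentially. \<forall>y\<in>F. \<exists>m<l. 2 * r y < d (n + m) y))"

locale relaxed_projections =
  fixes S :: "nat \<Rightarrow> 'a::euclidean_space set" and T :: "'a set"
    and \<alpha> :: real and x :: "nat \<Rightarrow> 'a"
  assumes closed_S: "closed (S n)" and convex_S: "convex (S n)"
    and T_subset: "T \<subseteq> S n" and T_nonempty: "T \<noteq> {}"
    and alpha_pos: "0 < \<alpha>" and alpha_less_2: "\<alpha> < 2"
    and step: "x (Suc n) = x n + \<alpha> *\<^sub>R (closest_point (S n) (x n) - x n)"
begin

abbreviation gap :: "nat \<Rightarrow> real" where
  "gap n \<equiv> dist (x n) (closest_point (S n) (x n))"

lemma S_nonempty: "S n \<noteq> {}"
  using T_subset T_nonempty by blast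

lemma dist_step: "dist (x n) (x (Suc n)) = \<alpha> * gap n"
  using alpha_pos by (simp add: step dist_norm norm_minus_commute)

lemma dist_Suc_sq_le: "z \<in> T \<Longrightarrow> (dist (x (Suc n)) z)\<^sup>2 \<le> (dist (x n) z)\<^sup>2 - \<alpha> * (2 - \<alpha>) * (gap n)\<^sup>2"
  unfolding step using closed_S convex_S T_subset alpha_pos
  by (intro dist_relaxed_projection_step_sq) auto

lemma dist_Suc_le:
  assumes "z \<in> T" shows "dist (x (Suc n)) z \<le> dist (x n) z"
proof (rule power2_le_imp_le)
  have "0 \<le> \<alpha> * (2 - \<alpha>) * (gap n)\<^sup>2" using alpha_pos alpha_less_2 by simp
  then show "(dist (x (Suc n)) z)\<^sup>2 \<le> (dist (x n) z)\<^sup>2" using dist_Suc_sq_le[OF assms, of n] by linarith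
qed simp

lemma dist_antimono: "z \<in> T \<Longrightarrow> m \<le> n \<Longrightarrow> dist (x n) z \<le> dist (x m) z"
  using decseqD[OF decseq_SucI[of "\<lambda>n. dist (x n) z"]] dist_Suc_le by blast

lemma gap_tendsto_0: "gap \<longlonglongrightarrow> 0"
proof -
  obtain z where z: "z \<in> T" using T_nonempty by blast
  define c where "c = \<alpha> * (2 - \<alpha>)"
  have c: "0 < c" unfolding c_def using alpha_pos alpha_less_2 by simp
  define a where "a n = (dist (x n) z)\<^sup>2" for n
  have "decseq a" unfolding a_def
    by (intro decseq_SucI power_mono dist_Suc_le[OF z]) simp
  moreover have "\<forall>n. 0 \<le> a n" by (simp add: a_def)
  ultimately obtain l where l: "a \<longlonglongrightarrow> l" by (rule decseq_convergent)
  have lim: "(\<lambda>n. (a n - a (Suc n)) / c) \<longlonglongrightarrow> 0"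
    using tendsto_divide_zero[OF tendsto_diff[OF l LIMSEQ_Suc[OF l], unfolded diff_self], of c] .
  have le: "norm ((gap n)\<^sup>2) \<le> (a n - a (Suc n)) / c" for n
    using dist_Suc_sq_le[OF z, of n] c unfolding a_def c_def by (simp add: field_simps)
  have "(\<lambda>n. (gap n)\<^sup>2) \<longlonglongrightarrow> 0"
    by (rule Lim_null_comparison[OF always_eventually[OF allI[OF le]] lim])
  then show ?thesis
    using tendsto_real_sqrt[of "\<lambda>n. (gap n)\<^sup>2" 0 sequentially] by simp
qed

lemma dist_shift_tendsto_0: "(\<lambda>N. dist (x N) (x (N + m))) \<longlonglongrightarrow> 0"
proof (induction m)
  case (Suc m)
  have le: "norm (dist (x N) (x (N + Suc m))) \<le> dist (x N) (x (N + m)) + \<alpha> * gap (N + m)" for N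
    using dist_triangle[of "x N" "x (N + Suc m)" "x (N + m)"] dist_step[of "N + m"] by simp
  have lim: "(\<lambda>N. dist (x N) (x (N + m)) + \<alpha> * gap (N + m)) \<longlonglongrightarrow> 0"
    using tendsto_add[OF Suc.IH tendsto_mult_right_zero[OF LIMSEQ_ignore_initial_segment[OF gap_tendsto_0]]]
    by simp
  show ?case
    by (rule Lim_null_comparison[OF always_eventually[OF allI[OF le]] lim])
qed simp

lemma infdist_shift_tendsto_0: "(\<lambda>N. infdist (x N) (S (N + m))) \<longlonglongrightarrow> 0"
proof -
  have le: "norm (infdist (x N) (S (N + m))) \<le> gap (N + m) + dist (x N) (x (N + m))" for N
    using infdist_triangle[of "x N" "S (N + m)" "x (N + m)"] infdist_nonneg[of "x N" "S (N + m)"]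
    unfolding infdist_eq_dist_closest_point[OF closed_S S_nonempty] by simp
  have lim: "(\<lambda>N. gap (N + m) + dist (x N) (x (N + m))) \<longlonglongrightarrow> 0"
    using tendsto_add[OF LIMSEQ_ignore_initial_segment[OF gap_tendsto_0] dist_shift_tendsto_0] by simp
  show ?thesis
    by (rule Lim_null_comparison[OF always_eventually[OF allI[OF le]] lim])
qed

lemma infdist_T_decseq: "decseq (\<lambda>n. infdist (x n) T)"
proof (rule decseq_SucI)
  fix n
  have "infdist (x (Suc n)) T \<le> dist (x n) z" if "z \<in> T" for z
    using infdist_le[OF that, of "x (Suc n)"] dist_Suc_le[OF that, of n] by (simp add: dist_commute)
  then show "infdist (x (Suc n)) T \<le> infdist (x n) T"
    unfolding infdist_notempty[OF T_nonempty, of "x n"] by (intro cINF_greatest T_nonempty)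
qed

lemma convergent_if_infdist_tendsto_0:
  assumes "closed T" "(\<lambda>n. infdist (x n) T) \<longlonglongrightarrow> 0"
  shows "\<exists>X\<in>T. x \<longlonglongrightarrow> X"
proof -
  have "Cauchy x"
  proof (rule metric_CauchyI)
    fix e :: real assume "0 < e"
    then obtain N where "infdist (x N) T < e / 2"
      using order_tendstoD(2)[OF assms(2), of "e / 2"] by (auto simp: eventually_sequentially)
    then obtain z where z: "z \<in> T" "dist (x N) z < e / 2"
      unfolding infdist_notempty[OF T_nonempty] by (subst (asm) cINF_less_iff[OF T_nonempty]) auto
    have "dist (x n) z < e / 2" if "n \<ge> N" for n
      using dist_antimono[OF z(1) that] z(2) by simp
    then show "\<exists>N. \<forall>m\<ge>N. \<forall>n\<ge>N. dist (x m) (x n) < e"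
      by (metis dist_commute dist_triangle_half_l)
  qed
  then obtain X where X: "x \<longlonglongrightarrow> X"
    using Cauchy_convergent_iff convergent_def by blast
  then have "(\<lambda>n. infdist (x n) T) \<longlonglongrightarrow> infdist X T" by (intro tendsto_infdist)
  with assms(2) have "infdist X T = 0" using LIMSEQ_unique by blast
  with X show ?thesis using in_closed_iff_infdist_zero[OF assms(1) T_nonempty] by blast
qed

lemma converges_if_far_points_recurrently_separated:
  assumes "closed T" "z \<in> T"
    and "far_points_recurrently_separated T z (dist z (x 0)) (\<lambda>n y. infdist y (S n))"
  shows "\<exists>X\<in>T. x \<longlonglongrightarrow> X"
proof -
  obtain \<rho> where \<rho>: "(\<lambda>n. infdist (x n) T) \<longlonglongrightarrow> \<rho>" "\<forall>n. \<rho> \<le> infdist (x n) T"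
    using decseq_convergent[OF infdist_T_decseq] infdist_nonneg by blast
  have "0 \<le> \<rho>"
    by (rule LIMSEQ_le_const[OF \<rho>(1)]) (simp add: infdist_nonneg)
  show ?thesis
  proof (cases "\<rho> = 0")
    case True
    with \<rho>(1) show ?thesis by (intro convergent_if_infdist_tendsto_0 assms(1)) simp
  next
    case False
    with \<open>0 \<le> \<rho>\<close> obtain q where q: "inverse (real (Suc q)) < \<rho>"
      using reals_Archimedean[of \<rho>] by auto
    obtain F r l where F: "finite F" "\<forall>y\<in>F. 0 < r y"
      and cover: "{y \<in> cball z (dist z (x 0)). inverse (Suc q) \<le> infdist y T} \<subseteq> (\<Union>y\<in>F. ball y (r y))"
      and hits: "\<exists>\<^sub>F n in sequentially. \<forall>y\<in>F. \<exists>m<l. 2 * r y < infdist y (S (n + m))"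
      using assms(3)[unfolded far_points_recurrently_separated_def, THEN spec, of q] by blast
    have "\<forall>y\<in>F. \<forall>m\<in>{..<l}. \<forall>\<^sub>F n in sequentially. infdist (x n) (S (n + m)) < r y"
      using F(2) order_tendstoD(2)[OF infdist_shift_tendsto_0] by blast
    then have "\<forall>\<^sub>F n in sequentially. \<forall>y\<in>F. \<forall>m\<in>{..<l}. infdist (x n) (S (n + m)) < r y"
      using F(1) by (intro eventually_ball_finite ballI) auto
    from frequently_ex[OF frequently_eventually_frequently[OF hits this]] obtain n
      where hit: "\<forall>y\<in>F. \<exists>m<l. 2 * r y < infdist y (S (n + m))"
        and near: "\<forall>y\<in>F. \<forall>m\<in>{..<l}. infdist (x n) (S (n + m)) < r y"
      by blast
    have "x n \<in> cball z (dist z (x 0))" "inverse (Suc q) \<le> infdist (x n) T"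
      using dist_antimono[OF assms(2), of 0 n] \<rho>(2) q by (auto simp: dist_commute intro: order.trans[OF less_imp_le])
    with cover obtain y where y: "y \<in> F" "dist y (x n) < r y" by auto
    with hit obtain m where "m < l" "2 * r y < infdist y (S (n + m))" by blast
    moreover have "infdist y (S (n + m)) \<le> infdist (x n) (S (n + m)) + dist y (x n)"
      by (rule infdist_triangle)
    ultimately show ?thesis using near y by force
  qed
qed

end

lemma funpow_seq_shift: "(seq_shift ^^ k) f = (\<lambda>n. f (k + n))"
  by (induction k arbitrary: f) (auto simp: seq_shift_def)

lemma measurable_funpow_seq_shift:
  "seq_shift ^^ k \<in> measurable (PiM UNIV (\<lambda>_. N)) (PiM UNIV (\<lambda>_. N))"
proof -
  have eq: "seq_shift ^^ k = (\<lambda>f n. f (k + n))" by (simp add: fun_eq_iff funpow_seq_shift)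
  show ?thesis unfolding eq
    by (rule measurable_PiM_single') (auto simp: space_PiM PiE_iff)
qed

locale ergodic_shift = prob_space L for L :: "(nat \<Rightarrow> 'i) measure" +
  fixes N :: "'i measure"
  assumes sets_L: "sets L = sets (PiM UNIV (\<lambda>_. N))"
    and shift_invariant: "distr L (PiM UNIV (\<lambda>_. N)) seq_shift = L"
    and shift_ergodic: "\<And>A. A \<in> sets L \<Longrightarrow> seq_shift -` A \<inter> space L = A \<Longrightarrow> emeasure L A = 0 \<or> emeasure L A = 1"
    and marginal: "distr L N (\<lambda>f. f 0) = N"
begin

lemma funpow_seq_shift_measurable: "seq_shift ^^ k \<in> measurable L L"
  using measurable_funpow_seq_shift[of k N] unfolding measurable_cong_sets[OF sets_L sets_L] .

lemma coordinate_measurable: "(\<lambda>f. f n) \<in> measurable L N"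
  using measurable_component_singleton[of n UNIV "\<lambda>_. N"]
  unfolding measurable_cong_sets[OF sets_L refl] by simp

lemma funpow_seq_shift_space: "f \<in> space L \<Longrightarrow> (seq_shift ^^ k) f \<in> space L"
  using measurable_space[OF funpow_seq_shift_measurable] .

lemma emeasure_funpow_seq_shift_vimage:
  assumes "A \<in> sets L"
  shows "emeasure L ((seq_shift ^^ k) -` A \<inter> space L) = emeasure L A"
proof (induction k)
  case (Suc k)
  have shift_L: "seq_shift \<in> measurable L L"
    using funpow_seq_shift_measurable[of 1] by simp
  have "(seq_shift ^^ Suc k) -` A \<inter> space L = seq_shift -` ((seq_shift ^^ k) -` A \<inter> space L) \<inter> space L"
    using measurable_space[OF shift_L] unfolding funpow_Suc_right by auto
  also have "emeasure L \<dots> = emeasure (distr L (PiM UNIV (\<lambda>_. N)) seq_shift) ((seq_shift ^^ k) -` A \<inter> space L)"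
  proof (rule emeasure_distr[symmetric])
    show "seq_shift \<in> measurable L (PiM UNIV (\<lambda>_. N))"
      using shift_L unfolding measurable_cong_sets[OF refl sets_L] .
    show "(seq_shift ^^ k) -` A \<inter> space L \<in> sets (PiM UNIV (\<lambda>_. N))"
      using measurable_sets[OF funpow_seq_shift_measurable assms] sets_L by simp
  qed
  also have "\<dots> = emeasure L A"
    unfolding shift_invariant using Suc .
  finally show ?case .
qed (simp add: sets.Int_space_eq2[OF assms])

lemma eventually_funpow_seq_shift_in:
  assumes W: "W \<in> sets L"
  defines "G \<equiv> {f \<in> space L. \<forall>\<^sub>F n in sequentially. (seq_shift ^^ n) f \<in> W}"
  shows "G \<in> sets L" and "emeasure L G \<le> emeasure L W"
proof -
  define G' where "G' k = (\<Inter>n\<in>{k..}. (seq_shift ^^ n) -` W \<inter> space L)" for k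
  have G'_sets: "G' k \<in> sets L" for k
    unfolding G'_def
    by (rule sets.countable_INT') (auto intro: measurable_sets[OF funpow_seq_shift_measurable W])
  have G: "G = (\<Union>k. G' k)"
    unfolding G_def G'_def eventually_sequentially by auto
  then show "G \<in> sets L" using G'_sets by auto
  have "incseq G'" unfolding incseq_def G'_def by auto
  then have "emeasure L G = (SUP k. emeasure L (G' k))"
    unfolding G using G'_sets by (intro SUP_emeasure_incseq[symmetric]) auto
  moreover have "emeasure L (G' k) \<le> emeasure L W" for k
  proof -
    have "emeasure L (G' k) \<le> emeasure L ((seq_shift ^^ k) -` W \<inter> space L)"
      by (rule emeasure_mono) (use measurable_sets[OF funpow_seq_shift_measurable W] in \<open>auto simp: G'_def\<close>)
    then show ?thesis using emeasure_funpow_seq_shift_vimage[OF W] by simp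
  qed
  ultimately show "emeasure L G \<le> emeasure L W" by (simp add: SUP_least)
qed

lemma AE_frequently_funpow_seq_shift_notin:
  assumes W: "W \<in> sets L" "emeasure L W < 1"
  shows "AE f in L. \<exists>\<^sub>F n in sequentially. (seq_shift ^^ n) f \<notin> W"
proof -
  define G where "G = {f \<in> space L. \<forall>\<^sub>F n in sequentially. (seq_shift ^^ n) f \<in> W}"
  note G = eventually_funpow_seq_shift_in[OF W(1), folded G_def]
  have "seq_shift -` G \<inter> space L = G"
  proof -
    have "(\<forall>\<^sub>F n in sequentially. (seq_shift ^^ n) (seq_shift f) \<in> W) \<longleftrightarrow>
          (\<forall>\<^sub>F n in sequentially. (seq_shift ^^ n) f \<in> W)" for f
      using eventually_sequentially_Suc[of "\<lambda>n. (seq_shift ^^ n) f \<in> W"]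
      by (simp only: funpow_Suc_right comp_def)
    moreover have "f \<in> space L \<Longrightarrow> seq_shift f \<in> space L" for f
      using funpow_seq_shift_space[of f 1] by simp
    ultimately show ?thesis unfolding G_def by auto
  qed
  with G W(2) have "G \<in> null_sets L"
    using shift_ergodic[OF G(1)] by auto
  then have "AE f in L. f \<notin> G" by (rule AE_not_in)
  with AE_space show ?thesis
  proof eventually_elim
    case (elim f)
    then show ?case by (simp add: G_def not_eventually)
  qed
qed

lemma AE_frequently_in:
  assumes A: "A \<in> sets N" "emeasure N A \<noteq> 0"
  shows "AE f in L. \<exists>\<^sub>F n in sequentially. f n \<in> A"
proof -
  interpret N: prob_space N
    using prob_space_distr[OF coordinate_measurable[of 0]] marginal by simp
  define W where "W = {f \<in> space L. f 0 \<notin> A}"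
  have W_vimage: "W = (\<lambda>f. f 0) -` (space N - A) \<inter> space L"
    unfolding W_def using measurable_space[OF coordinate_measurable[of 0]] by auto
  then have W: "W \<in> sets L"
    using measurable_sets[OF coordinate_measurable, of "space N - A" 0] A(1) by auto
  from W_vimage have "emeasure L W = emeasure N (space N - A)"
    using emeasure_distr[OF coordinate_measurable[of 0], of "space N - A"] A(1) marginal by simp
  also have "\<dots> = ennreal (1 - N.prob A)"
    using N.prob_compl[OF A(1)] by (simp add: N.emeasure_eq_measure)
  also have "\<dots> < 1"
  proof -
    have "N.prob A \<noteq> 0" using A(2) by (simp add: N.emeasure_eq_measure)
    then have "0 < N.prob A" using measure_nonneg[of N A] by linarith
    then show ?thesis using ennreal_lessI[of 1 "1 - N.prob A"] by simp
  qed
  finally have "AE f in L. \<exists>\<^sub>F n in sequentially. (seq_shift ^^ n) f \<notin> W"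
    by (rule AE_frequently_funpow_seq_shift_notin[OF W])
  with AE_space show ?thesis
  proof eventually_elim
    case (elim f)
    show ?case using elim(2)
    proof (rule frequently_elim1)
      fix n assume "(seq_shift ^^ n) f \<notin> W"
      with funpow_seq_shift_space[OF elim(1)] show "f n \<in> A" by (simp add: W_def funpow_seq_shift)
    qed
  qed
qed

lemma sets_avoiding_prefix:
  assumes "A \<in> sets N"
  shows "{f \<in> space L. \<forall>m<l. f m \<notin> A} \<in> sets L"
proof -
  have "{f \<in> space L. \<forall>m<l. f m \<notin> A} = space L - (\<Union>m\<in>{..<l}. (\<lambda>f. f m) -` A \<inter> space L)"
    by auto
  also have "\<dots> \<in> sets L"
    using measurable_sets[OF coordinate_measurable assms]
    by (intro sets.Diff sets.top sets.finite_UN) auto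
  finally show ?thesis .
qed

lemma measure_avoiding_prefix_tendsto_0:
  assumes A: "A \<in> sets N" "emeasure N A \<noteq> 0"
  shows "(\<lambda>l. measure L {f \<in> space L. \<forall>m<l. f m \<notin> A}) \<longlonglongrightarrow> 0"
proof -
  define B where "B l = {f \<in> space L. \<forall>m<l. f m \<notin> A}" for l
  have B_sets: "B l \<in> sets L" for l
    unfolding B_def using A(1) by (rule sets_avoiding_prefix)
  have "decseq B" unfolding B_def decseq_def by auto
  then have "(\<lambda>l. measure L (B l)) \<longlonglongrightarrow> measure L (\<Inter>l. B l)"
    using B_sets by (intro Lim_measure_decseq) (auto simp: emeasure_eq_measure)
  moreover have "measure L (\<Inter>l. B l) = 0"
  proof -
    have "AE f in L. \<exists>n. f n \<in> A"
      using AE_frequently_in[OF A] by (auto elim: frequently_ex)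
    moreover have "{f \<in> space L. \<not> (\<exists>n. f n \<in> A)} = (\<Inter>l. B l)"
      unfolding B_def by (auto dest: spec[of _ "Suc _"])
    ultimately show ?thesis
      using AE_iff_measurable[of "\<Inter>l. B l" L "\<lambda>f. \<exists>n. f n \<in> A"] B_sets
      by (auto simp: emeasure_eq_measure)
  qed
  ultimately show ?thesis unfolding B_def by simp
qed

lemma AE_frequently_window_hits:
  assumes F: "finite F"
    and A: "\<And>y. y \<in> F \<Longrightarrow> A y \<in> sets N" "\<And>y. y \<in> F \<Longrightarrow> emeasure N (A y) \<noteq> 0"
  shows "\<exists>l. AE f in L. \<exists>\<^sub>F n in sequentially. \<forall>y\<in>F. \<exists>m<l. f (n + m) \<in> A y"
proof -
  define B where "B l y = {f \<in> space L. \<forall>m<l. f m \<notin> A y}" for l y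
  have B_sets: "B l y \<in> sets L" if "y \<in> F" for l y
    unfolding B_def using A(1)[OF that] by (rule sets_avoiding_prefix)
  have "(\<lambda>l. \<Sum>y\<in>F. measure L (B l y)) \<longlonglongrightarrow> 0"
    unfolding B_def using A by (intro tendsto_null_sum measure_avoiding_prefix_tendsto_0)
  from order_tendstoD(2)[OF this, of 1] obtain l where l: "(\<Sum>y\<in>F. measure L (B l y)) < 1"
    by (auto simp: eventually_sequentially)
  define W where "W = (\<Union>y\<in>F. B l y)"
  have W_sets: "W \<in> sets L" unfolding W_def using F B_sets by (intro sets.finite_UN) auto
  have "measure L W \<le> (\<Sum>y\<in>F. measure L (B l y))"
    unfolding W_def using F B_sets by (intro finite_measure_subadditive_finite) auto
  with l have "emeasure L W < 1"
    by (simp add: emeasure_eq_measure ennreal_lessI[of 1, simplified])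
  then have "AE f in L. \<exists>\<^sub>F n in sequentially. (seq_shift ^^ n) f \<notin> W"
    by (rule AE_frequently_funpow_seq_shift_notin[OF W_sets])
  with AE_space have "AE f in L. \<exists>\<^sub>F n in sequentially. \<forall>y\<in>F. \<exists>m<l. f (n + m) \<in> A y"
  proof eventually_elim
    case (elim f)
    show ?case using elim(2)
    proof (rule frequently_elim1)
      fix n assume "(seq_shift ^^ n) f \<notin> W"
      with funpow_seq_shift_space[OF elim(1), of n] show "\<forall>y\<in>F. \<exists>m<l. f (n + m) \<in> A y"
        by (auto simp: W_def B_def funpow_seq_shift)
    qed
  qed
  then show ?thesis by blast
qed

lemma AE_finite_cover_frequently_separated:
  fixes K :: "'a::metric_space set" and g :: "'a \<Rightarrow> 'i \<Rightarrow> real"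
  assumes "compact K"
    and g: "\<And>y. y \<in> K \<Longrightarrow> g y \<in> borel_measurable N"
    and far: "\<And>y. y \<in> K \<Longrightarrow> \<exists>r>0. emeasure N {i \<in> space N. r < g y i} \<noteq> 0"
  shows "\<exists>F r l. finite F \<and> (\<forall>y\<in>F. 0 < r y) \<and> K \<subseteq> (\<Union>y\<in>F. ball y (r y)) \<and>
      (AE f in L. \<exists>\<^sub>F n in sequentially. \<forall>y\<in>F. \<exists>m<l. 2 * r y < g y (f (n + m)))"
proof -
  have "\<exists>r>0. emeasure N {i \<in> space N. 2 * r < g y i} \<noteq> 0" if y: "y \<in> K" for y
  proof -
    obtain r where "0 < r" "emeasure N {i \<in> space N. r < g y i} \<noteq> 0"
      using far[OF y] by blast
    then show ?thesis by (intro exI[of _ "r / 2"]) simp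
  qed
  then have "\<forall>y\<in>K. \<exists>r>0. emeasure N {i \<in> space N. 2 * r < g y i} \<noteq> 0" by blast
  then obtain r where r: "\<forall>y\<in>K. 0 < r y \<and> emeasure N {i \<in> space N. 2 * r y < g y i} \<noteq> 0"
    by (rule bchoice[THEN exE])
  have "K \<subseteq> (\<Union>y\<in>K. ball y (r y))" using r by force
  then obtain F where F: "F \<subseteq> K" "finite F" "K \<subseteq> (\<Union>y\<in>F. ball y (r y))"
    using compactE_image[OF \<open>compact K\<close>, of K "\<lambda>y. ball y (r y)"] by blast
  have "{i \<in> space N. 2 * r y < g y i} \<in> sets N" if "y \<in> F" for y
    using g[of y] F(1) that unfolding borel_measurable_iff_greater by blast
  then obtain l where "AE f in L. \<exists>\<^sub>F n in sequentially. \<forall>y\<in>F. \<exists>m<l. f (n + m) \<in> {i \<in> space N. 2 * r y < g y i}"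
    using AE_frequently_window_hits[OF F(2), of "\<lambda>y. {i \<in> space N. 2 * r y < g y i}"] r F(1) by blast
  then have "AE f in L. \<exists>\<^sub>F n in sequentially. \<forall>y\<in>F. \<exists>m<l. 2 * r y < g y (f (n + m))"
    by (rule eventually_mono) (auto elim!: frequently_elim1)
  then show ?thesis using F r by blast
qed

lemma AE_far_points_recurrently_separated:
  fixes g :: "'a::heine_borel \<Rightarrow> 'i \<Rightarrow> real" and T :: "'a set"
  assumes g: "\<And>y. g y \<in> borel_measurable N"
    and far: "\<And>y. y \<notin> T \<Longrightarrow> \<exists>r>0. emeasure N {i \<in> space N. r < g y i} \<noteq> 0"
  shows "AE f in L. far_points_recurrently_separated T z R (\<lambda>n y. g y (f n))"
  unfolding far_points_recurrently_separated_def AE_all_countable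
proof
  fix q :: nat
  define K where "K = {y \<in> cball z R. inverse (Suc q) \<le> infdist y T}"
  have "K = cball z R \<inter> {y. inverse (Suc q) \<le> infdist y T}" unfolding K_def by blast
  then have "compact K"
    by (simp only:) (intro compact_Int_closed compact_cball closed_Collect_le continuous_intros)
  moreover have "y \<notin> T" if "y \<in> K" for y
    using that by (auto simp: K_def)
  ultimately obtain F r l where F: "finite F" "\<forall>y\<in>F. 0 < r y" "K \<subseteq> (\<Union>y\<in>F. ball y (r y))"
    and separated: "AE f in L. \<exists>\<^sub>F n in sequentially. \<forall>y\<in>F. \<exists>m<l. 2 * r y < g y (f (n + m))"
    using AE_finite_cover_frequently_separated[of K g, OF _ g far] by blast
  from separated show "AE f in L. \<exists>F r l. finite F \<and> (\<forall>y\<in>F. 0 < r y) \<and>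
      {y \<in> cball z R. inverse (Suc q) \<le> infdist y T} \<subseteq> (\<Union>y\<in>F. ball y (r y)) \<and>
      (\<exists>\<^sub>F n in sequentially. \<forall>y\<in>F. \<exists>m<l. 2 * r y < g y (f (n + m)))"
    by (rule eventually_mono) (use F in \<open>unfold K_def, blast\<close>)
qed

lemma AE_far_points_recurrently_separated_essential_Inter:
  fixes C :: "'i \<Rightarrow> 'a::euclidean_space set"
  assumes "(\<lambda>(i, x). closest_point (C i) x) \<in> borel_measurable (N \<Otimes>\<^sub>M borel)"
    and C: "\<And>i. i \<in> space N \<Longrightarrow> closed (C i) \<and> C i \<noteq> {}"
  shows "AE f in L. far_points_recurrently_separated (essential_Inter N C) z R (\<lambda>n y. infdist y (C (f n)))"
proof (rule AE_far_points_recurrently_separated)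
  show meas: "(\<lambda>i. infdist y (C i)) \<in> borel_measurable N" for y
    using assms by (rule borel_measurable_infdist_closest_point)
  show "\<exists>r>0. emeasure N {i \<in> space N. r < infdist y (C i)} \<noteq> 0"
    if "y \<notin> essential_Inter N C" for y
    using C meas that by (rule not_in_essential_Inter_far)
qed

end

lemma measurable_seq:
  assumes "\<And>n. \<xi> n \<in> measurable M N"
  shows "(\<lambda>\<omega> n. \<xi> n \<omega>) \<in> measurable M (PiM UNIV (\<lambda>_. N))"
  using assms by (intro measurable_PiM_single') (auto simp: space_PiM PiE_iff intro: measurable_space[OF assms])

lemma ergodic_shift_seq_law:
  assumes "prob_space M" "\<And>n. \<xi> n \<in> measurable M \<nu>" "distr M \<nu> (\<xi> 0) = \<nu>"
    and "ergodic_stationary M \<nu> \<xi>"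
  shows "ergodic_shift (seq_law M \<nu> \<xi>) \<nu>"
proof (intro ergodic_shift.intro ergodic_shift_axioms.intro)
  have seq: "(\<lambda>\<omega> n. \<xi> n \<omega>) \<in> measurable M (PiM UNIV (\<lambda>_. \<nu>))"
    using assms(2) by (rule measurable_seq)
  show "prob_space (seq_law M \<nu> \<xi>)"
    unfolding seq_law_def using assms(1) seq by (rule prob_space.prob_space_distr)
  show "sets (seq_law M \<nu> \<xi>) = sets (PiM UNIV (\<lambda>_. \<nu>))"
    by (simp add: seq_law_def)
  show "distr (seq_law M \<nu> \<xi>) (PiM UNIV (\<lambda>_. \<nu>)) seq_shift = seq_law M \<nu> \<xi>"
    and "\<And>A. A \<in> sets (seq_law M \<nu> \<xi>) \<Longrightarrow> seq_shift -` A \<inter> space (seq_law M \<nu> \<xi>) = A \<Longrightarrow>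
      emeasure (seq_law M \<nu> \<xi>) A = 0 \<or> emeasure (seq_law M \<nu> \<xi>) A = 1"
    using assms(4) unfolding ergodic_stationary_def Let_def by (blast, blast)
  have "distr (seq_law M \<nu> \<xi>) \<nu> (\<lambda>f. f 0) = distr M \<nu> ((\<lambda>f. f 0) \<circ> (\<lambda>\<omega> n. \<xi> n \<omega>))"
    unfolding seq_law_def by (rule distr_distr[OF measurable_component_singleton seq]) simp
  then show "distr (seq_law M \<nu> \<xi>) \<nu> (\<lambda>f. f 0) = \<nu>"
    using assms(3) by (simp add: comp_def)
qed

lemma AE_all_identically_distributed:
  assumes "\<And>n. \<xi> n \<in> measurable M \<nu>" "\<And>n. distr M \<nu> (\<xi> n) = \<nu>" "AE i in \<nu>. P i"
  shows "AE \<omega> in M. \<forall>n::nat. P (\<xi> n \<omega>)"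
proof -
  have "AE \<omega> in M. P (\<xi> n \<omega>)" for n
    by (rule AE_distrD[OF assms(1)]) (simp only: assms(2,3))
  then show ?thesis unfolding AE_all_countable by blast
qed

lemma AE_convergent_imp_measurable_limit:
  fixes X :: "nat \<Rightarrow> 'w \<Rightarrow> 'a::{banach, second_countable_topology}"
  assumes "\<And>n. X n \<in> borel_measurable M" "AE \<omega> in M. \<exists>x\<in>T. (\<lambda>n. X n \<omega>) \<longlonglongrightarrow> x"
  shows "\<exists>Y. Y \<in> borel_measurable M \<and> (AE \<omega> in M. (\<lambda>n. X n \<omega>) \<longlonglongrightarrow> Y \<omega>) \<and> (AE \<omega> in M. Y \<omega> \<in> T)"
proof (intro exI conjI)
  show "(\<lambda>\<omega>. lim (\<lambda>n. X n \<omega>)) \<in> borel_measurable M"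
    using assms(1) by (rule borel_measurable_lim_metric)
  show "AE \<omega> in M. (\<lambda>n. X n \<omega>) \<longlonglongrightarrow> lim (\<lambda>n. X n \<omega>)"
    using assms(2) by eventually_elim (auto intro: convergentI simp: convergent_LIMSEQ_iff[symmetric])
  show "AE \<omega> in M. lim (\<lambda>n. X n \<omega>) \<in> T"
    using assms(2) by eventually_elim (auto dest: limI)
qed

theorem theoremC:
  fixes \<nu> :: "'i measure" and C :: "'i \<Rightarrow> 'a::euclidean_space set"
    and M :: "'w measure" and \<xi> :: "nat \<Rightarrow> 'w \<Rightarrow> 'i"
    and \<alpha> :: real and x0 :: 'a
  assumes "prob_space \<nu>"
    and "\<And>i. i \<in> space \<nu> \<Longrightarrow> C i \<noteq> {} \<and> closed (C i) \<and> convex (C i)"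
    and "(\<lambda>(i, x). closest_point (C i) x) \<in> borel_measurable (\<nu> \<Otimes>\<^sub>M borel)"
    and "{x. AE i in \<nu>. x \<in> C i} \<noteq> {}"
    and "prob_space M"
    and "\<And>n. \<xi> n \<in> measurable M \<nu>"
    and "\<And>n. distr M \<nu> (\<xi> n) = \<nu>"
    and "ergodic_stationary M \<nu> \<xi>"
    and "0 < \<alpha>" and "\<alpha> < 2"
  shows "\<exists>X. X \<in> borel_measurable M \<and>
           (AE \<omega> in M. (\<lambda>n. proj_iter C \<alpha> x0 \<xi> n \<omega>) \<longlonglongrightarrow> X \<omega>) \<and>
           (AE \<omega> in M. X \<omega> \<in> {x. AE i in \<nu>. x \<in> C i})"
proof -
  note C = assms(2) and \<xi> = assms(6)
  define T where "T = essential_Inter \<nu> C"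
  have "closed T" unfolding T_def using C by (intro closed_essential_Inter) blast
  have "T \<noteq> {}" using assms(4) by (simp add: T_def essential_Inter_def)
  then obtain z where z: "z \<in> T" by blast
  interpret L: ergodic_shift "seq_law M \<nu> \<xi>" \<nu>
    by (rule ergodic_shift_seq_law[OF assms(5,6) assms(7)[of 0] assms(8)])
  have "AE f in seq_law M \<nu> \<xi>. far_points_recurrently_separated T z (dist z x0) (\<lambda>n y. infdist y (C (f n)))"
    unfolding T_def using assms(3) C by (intro L.AE_far_points_recurrently_separated_essential_Inter) blast+
  then have separated:
    "AE \<omega> in M. far_points_recurrently_separated T z (dist z x0) (\<lambda>n y. infdist y (C (\<xi> n \<omega>)))"
    unfolding seq_law_def by (rule AE_distrD[OF measurable_seq[OF \<xi>]])
  have inside: "AE \<omega> in M. \<forall>n. T \<subseteq> C (\<xi> n \<omega>)"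
    unfolding T_def by (rule AE_all_identically_distributed[OF \<xi> assms(7) AE_essential_Inter_subset]) (use C in blast)
  from separated inside AE_space have "AE \<omega> in M. \<exists>X\<in>T. (\<lambda>n. proj_iter C \<alpha> x0 \<xi> n \<omega>) \<longlonglongrightarrow> X"
  proof eventually_elim
    case (elim \<omega>)
    interpret relaxed_projections "\<lambda>n. C (\<xi> n \<omega>)" T \<alpha> "\<lambda>n. proj_iter C \<alpha> x0 \<xi> n \<omega>"
      using elim(2) C[OF measurable_space[OF \<xi> elim(3)]] assms(9,10) z
      by unfold_locales (auto simp: Let_def)
    show ?case
      using converges_if_far_points_recurrently_separated[OF \<open>closed T\<close> z] elim(1) by simp
  qed
  from AE_convergent_imp_measurable_limit[OF borel_measurable_proj_iter[OF assms(3) \<xi>] this]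
  show ?thesis unfolding T_def essential_Inter_def .
qed

end
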